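(* Let $Q$ be a quadrangulation with a distinguished vertex $s_0$ on its outer face. Then there is a bijection between the $2$-orientations of $Q$ and the strong labelings of $Q$ (with special vertex $s_0$).
   Context: A quadrangulation is a simple plane graph with at least four vertices all of whose faces (including the outer face) are bounded by $4$-cycles; it is bipartite. Color the vertices properly black and white so that $s_0$ is black, and let $s_1$ be the other black vertex on the outer face (the one opposite to $s_0$). An angle is an incidence of a vertex with a face. A strong labeling of $Q$ is a map from the angles of $Q$ to $\{0,1\}$ such that: (G0) all angles at $s_i$ are labeled $i$; (G1) for each vertex $v\notin\{s_0,s_1\}$ the labels around $v$ form one non-empty cyclic interval of $1$s and one non-empty cyclic interval of $0$s; (G2) for each edge, the two labels on the two sides of the edge coincide at one endpoint and differ at the other; (G3) the labels in each bounded face, read cyclically, are $0,0,1,1$, and reading the labels of the outer face in clockwise order starting at $s_0$ they are $0,0,1,1$. A $2$-orientation of $Q$ is an orientation of its edges in which every vertex other than $s_0,s_1$ has outdegree exactly $2$. *)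

theory Defs
  imports "HOL-Combinatorics.Permutations" "HOL-Library.FuncSet"
begin

text \<open>
  Plane graphs are represented as combinatorial maps (rotation systems).
  A map is given by a finite set of darts D (half-edges), a fixed-point-free
  involution alpha on D (the two darts of an edge) and a permutation sigma of D
  (the counterclockwise rotation of the darts around their common tail vertex).  With sigma counterclockwise, phi walks along a
  face keeping the face on its right-hand side; so bounded faces are traversed
  clockwise and the outer face counterclockwise (as seen in the plane).
  A connected map is plane (genus 0) iff V - E + F = 2 (Euler).

  Angles: the dart e stands for the angle at vertex (tail of) e between e and
  sigma e; this angle lies in the face orb phi (sigma e).  Equivalently, the
  angle of a face at the tail of a face dart f is the dart alpha (phi^-1 f);
  hence the angles of a face with darts f, phi f, phi^2 f, phi^3 f, read in
  the traversal order of phi, are the darts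
  alpha (phi^3 f), alpha f, alpha (phi f), alpha (phi^2 f).
\<close>

definition orb :: "('a \<Rightarrow> 'a) \<Rightarrow> 'a \<Rightarrow> 'a set" where
  "orb f x = {(f ^^ n) x | n. True}"

definition face_perm :: "('d \<Rightarrow> 'd) \<Rightarrow> ('d \<Rightarrow> 'd) \<Rightarrow> 'd \<Rightarrow> 'd" where
  "face_perm alpha sigma d = sigma (alpha d)"

definition map_vertices :: "'d set \<Rightarrow> ('d \<Rightarrow> 'd) \<Rightarrow> 'd set set" where
  "map_vertices D sigma = {orb sigma d | d. d \<in> D}"

definition map_edges :: "'d set \<Rightarrow> ('d \<Rightarrow> 'd) \<Rightarrow> 'd set set" where
  "map_edges D alpha = {{d, alpha d} | d. d \<in> D}"

definition map_faces :: "'d set \<Rightarrow> ('d \<Rightarrow> 'd) \<Rightarrow> ('d \<Rightarrow> 'd) \<Rightarrow> 'd set set" where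
  "map_faces D alpha sigma = {orb (face_perm alpha sigma) d | d. d \<in> D}"

definition map_connected :: "'d set \<Rightarrow> ('d \<Rightarrow> 'd) \<Rightarrow> ('d \<Rightarrow> 'd) \<Rightarrow> bool" where
  "map_connected D alpha sigma \<longleftrightarrow>
     (\<forall>d\<in>D. \<forall>d'\<in>D. (d, d') \<in> ({(x, alpha x) | x. x \<in> D} \<union> {(x, sigma x) | x. x \<in> D})\<^sup>*)"

text \<open>A quadrangulation with outer face the phi-orbit of dart z; the
  distinguished vertex s0 is the tail of z (every vertex of the outer face is
  the tail of some dart of the outer face, so this is no restriction).\<close>
definition is_quadrangulation ::
  "'d set \<Rightarrow> ('d \<Rightarrow> 'd) \<Rightarrow> ('d \<Rightarrow> 'd) \<Rightarrow> 'd \<Rightarrow> bool" where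
  "is_quadrangulation D alpha sigma z \<longleftrightarrow>
     finite D \<and> alpha permutes D \<and> sigma permutes D
   \<and> (\<forall>d\<in>D. alpha (alpha d) = d \<and> alpha d \<noteq> d)
   \<and> map_connected D alpha sigma
   \<comment> \<open>plane: Euler's formula for the connected map (genus 0)\<close>
   \<and> int (card (map_vertices D sigma)) - int (card (map_edges D alpha))
       + int (card (map_faces D alpha sigma)) = 2
   \<comment> \<open>simple: no loops, no multiple edges\<close>
   \<and> (\<forall>d\<in>D. orb sigma (alpha d) \<noteq> orb sigma d)
   \<and> (\<forall>d\<in>D. \<forall>d'\<in>D. orb sigma d = orb sigma d' \<and> orb sigma (alpha d) = orb sigma (alpha d')
          \<longrightarrow> d = d')
   \<comment> \<open>at least four vertices\<close>
   \<and> card (map_vertices D sigma) \<ge> 4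
   \<comment> \<open>every face (including the outer one) is bounded by a 4-cycle\<close>
   \<and> (\<forall>F\<in>map_faces D alpha sigma. card F = 4 \<and> card (orb sigma ` F) = 4)
   \<and> z \<in> D"

definition outer_face :: "('d \<Rightarrow> 'd) \<Rightarrow> ('d \<Rightarrow> 'd) \<Rightarrow> 'd \<Rightarrow> 'd set" where
  "outer_face alpha sigma z = orb (face_perm alpha sigma) z"

definition s0_vertex :: "('d \<Rightarrow> 'd) \<Rightarrow> 'd \<Rightarrow> 'd set" where
  "s0_vertex sigma z = orb sigma z"

definition s1_vertex :: "('d \<Rightarrow> 'd) \<Rightarrow> ('d \<Rightarrow> 'd) \<Rightarrow> 'd \<Rightarrow> 'd set" where
  "s1_vertex alpha sigma z = orb sigma ((face_perm alpha sigma ^^ 2) z)"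

text \<open>Orientations: the set O of darts pointing away from their tail, containing
  exactly one dart of each edge.  2-orientation: outdegree 2 at every vertex
  other than s0, s1.\<close>
definition two_orientations :: "'d set \<Rightarrow> ('d \<Rightarrow> 'd) \<Rightarrow> ('d \<Rightarrow> 'd) \<Rightarrow> 'd \<Rightarrow> 'd set set" where
  "two_orientations D alpha sigma z =
     {Ot. Ot \<subseteq> D \<and> (\<forall>d\<in>D. d \<in> Ot \<longleftrightarrow> alpha d \<notin> Ot)
       \<and> (\<forall>d\<in>D. orb sigma d \<noteq> s0_vertex sigma z \<and> orb sigma d \<noteq> s1_vertex alpha sigma z
              \<longrightarrow> card {e \<in> orb sigma d. e \<in> Ot} = 2)}"

definition strong_labelings :: "'d set \<Rightarrow> ('d \<Rightarrow> 'd) \<Rightarrow> ('d \<Rightarrow> 'd) \<Rightarrow> 'd \<Rightarrow> ('d \<Rightarrow> nat) set" where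
  "strong_labelings D alpha sigma z =
     (let phi = face_perm alpha sigma; S0 = s0_vertex sigma z; S1 = s1_vertex alpha sigma z in
     {l \<in> D \<rightarrow>\<^sub>E {0, 1}.
       \<comment> \<open>(G0)\<close>
       (\<forall>e\<in>D. (orb sigma e = S0 \<longrightarrow> l e = 0) \<and> (orb sigma e = S1 \<longrightarrow> l e = 1))
       \<comment> \<open>(G1): around v, in rotation order, one nonempty interval of 1s, one of 0s\<close>
     \<and> (\<forall>v\<in>D. orb sigma v \<noteq> S0 \<and> orb sigma v \<noteq> S1 \<longrightarrow>
          (\<exists>d\<in>orb sigma v. \<exists>k. 0 < k \<and> k < card (orb sigma v) \<and>
             (\<forall>j < card (orb sigma v). l ((sigma ^^ j) d) = (if j < k then 1 else 0))))
       \<comment> \<open>(G2): the two angles beside edge {d, alpha d} at the tail of d are the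
            angles inv sigma d and d; at the other endpoint inv sigma (alpha d) and alpha d\<close>
     \<and> (\<forall>d\<in>D. (l d = l (inv sigma d)) \<noteq> (l (alpha d) = l (inv sigma (alpha d))))
       \<comment> \<open>(G3) bounded faces: angles read cyclically are 0,0,1,1\<close>
     \<and> (\<forall>F\<in>map_faces D alpha sigma. F \<noteq> outer_face alpha sigma z \<longrightarrow>
          (\<exists>f\<in>F. l (alpha f) = 0 \<and> l (alpha (phi f)) = 0
                 \<and> l (alpha ((phi ^^ 2) f)) = 1 \<and> l (alpha ((phi ^^ 3) f)) = 1))
       \<comment> \<open>(G3) outer face read clockwise (= against phi) from s0:
            angles at s0, at tail of phi^3 z, at s1, at tail of phi z\<close>
     \<and> l (alpha ((phi ^^ 3) z)) = 0 \<and> l (alpha ((phi ^^ 2) z)) = 0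
     \<and> l (alpha (phi z)) = 1 \<and> l (alpha z) = 1})"

end

theory Submission
  imports Defs "HOL-Combinatorics.Orbits"
begin

text \<open>
  A strong labeling is determined by where its labels change around the vertices: at a
  vertex the label changes exactly before the darts pointing away from it, and these darts
  form a 2-orientation.  This map from strong labelings to 2-orientations is the bijection.

  It is injective because in a strong labeling two consecutive angles of a face carry
  different labels exactly when the first one sits at a black vertex; so two strong
  labelings with the same orientation agree along faces as well as around vertices, hence
  everywhere by connectivity.

  It is surjective because a 2-orientation prescribes where a labeling must flip, around
  vertices and along faces, and these prescriptions form a 1-cocycle over GF(2): outdegrees
  are 0 or 2 (\<open>s0\<close> and \<open>s1\<close> are sinks, by counting), and every face has two black corners.
  On the sphere every 1-cocycle is a coboundary, which follows from Euler's formula by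
  counting cochains; the resulting labeling is strong.
\<close>

section \<open>Orbits of permutations\<close>

lemma orb_eq_orbit: "permutation p \<Longrightarrow> orb p x = orbit p x"
  unfolding orb_def by (simp add: orbit_altdef_permutation)

lemma orb_self: "x \<in> orb p x"
  unfolding orb_def by (auto intro: exI[where x=0])

lemma funpow_in_orb: "(p ^^ n) x \<in> orb p x"
  unfolding orb_def by auto

lemma funpow_permutes_in: "p permutes A \<Longrightarrow> x \<in> A \<Longrightarrow> (p ^^ n) x \<in> A"
proof (induct n)
  case (Suc n)
  then show ?case using permutes_in_image[OF Suc(2)] by simp
qed simp

lemma orb_subset:
  assumes "p permutes A" "x \<in> A" shows "orb p x \<subseteq> A"
proof
  fix y assume "y \<in> orb p x"
  then obtain n where "y = (p ^^ n) x" unfolding orb_def by blast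
  then show "y \<in> A" using funpow_permutes_in[OF assms] by simp
qed

lemma finite_orb: "permutation p \<Longrightarrow> finite (orb p x)"
  using finite_orbit permutation_self_in_orbit orb_eq_orbit by metis

lemma orb_eq_iff:
  assumes p: "permutation p" shows "y \<in> orb p x \<longleftrightarrow> orb p y = orb p x"
proof
  assume "y \<in> orb p x"
  then have y: "y \<in> orbit p x" using orb_eq_orbit[OF p] by simp
  have x: "x \<in> orbit p y" using orbit_swap[OF permutation_self_in_orbit[OF p] y] .
  have "orbit p y = orbit p x"
    using orbit_trans[OF _ x] orbit_trans[OF _ y] by blast
  then show "orb p y = orb p x" using orb_eq_orbit[OF p] by simp
next
  assume "orb p y = orb p x"
  then show "y \<in> orb p x" using orb_self by metis
qed

lemma orb_step: "permutation p \<Longrightarrow> orb p (p x) = orb p x"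
  by (simp add: orb_eq_orbit permutation_orbit_step)

lemma orb_inv: assumes "permutation p" shows "orb p (inv p x) = orb p x"
proof -
  have "p (inv p x) = x"
    using assms by (meson bij_inv_eq_iff permutation_bijective)
  then show ?thesis using orb_step[OF assms, of "inv p x"] by simp
qed

lemma orb_image: assumes "permutation p" shows "p ` orb p x = orb p x"
proof -
  have "p ` orb p x = orb p (p x)"
    unfolding orb_def by (auto simp: funpow_swap1 intro!: image_eqI[of _ p])
  then show ?thesis using orb_step[OF assms] by simp
qed

lemma bij_betw_orb:
  assumes p: "permutation p" shows "bij_betw p (orb p x) (orb p x)"
proof -
  have "inj p" using bij_is_inj[OF permutation_bijective[OF p]] .
  then show ?thesis
    unfolding bij_betw_def using orb_image[OF p] inj_on_subset[of p UNIV] by simp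
qed

lemma orb_enum:
  assumes p: "permutation p"
  shows "0 < card (orb p x)" "(p ^^ card (orb p x)) x = x"
    "inj_on (\<lambda>k. (p ^^ k) x) {..<card (orb p x)}"
    "orb p x = (\<lambda>k. (p ^^ k) x) ` {..<card (orb p x)}"
proof -
  have x: "x \<in> orbit p x" using permutation_self_in_orbit[OF p] .
  define m where "m = funpow_dist1 p x x"
  have e: "orb p x = (\<lambda>k. (p ^^ k) x) ` {..<m}"
    using orbit_conv_funpow_dist1[OF x] orb_eq_orbit[OF p] m_def by (simp add: atLeast0LessThan)
  have i: "inj_on (\<lambda>k. (p ^^ k) x) {..<m}"
    using inj_on_funpow_dist1[OF x] m_def by (simp add: atLeast0LessThan)
  have c: "card (orb p x) = m" using e i by (simp add: card_image)
  show "0 < card (orb p x)" using c m_def by simp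
  show "(p ^^ card (orb p x)) x = x" using c m_def funpow_dist1_prop[OF x] by simp
  show "inj_on (\<lambda>k. (p ^^ k) x) {..<card (orb p x)}" using i c by simp
  show "orb p x = (\<lambda>k. (p ^^ k) x) ` {..<card (orb p x)}" using e c by simp
qed

lemma inv_funpow:
  assumes p: "permutation p" and j: "0 < j"
  shows "inv p ((p ^^ j) x) = (p ^^ (j - 1)) x"
proof -
  have "(p ^^ j) x = p ((p ^^ (j - 1)) x)"
    using j by (metis Suc_pred' comp_apply funpow.simps(2))
  then show ?thesis
    using p by (metis bij_inv_eq_iff permutation_bijective)
qed

lemma inv_eq_funpow_card: "permutation p \<Longrightarrow> inv p x = (p ^^ (card (orb p x) - 1)) x"
  using inv_funpow[of p "card (orb p x)" x] orb_enum[of p x] by simp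

lemma card_changes_of_interval_labeling:
  assumes p: "permutation p" and k: "0 < k" "k < card (orb p x)" and "a \<noteq> b"
    and f: "\<forall>j < card (orb p x). f ((p ^^ j) x) = (if j < k then a else b)"
  shows "card {e \<in> orb p x. f e \<noteq> f (inv p e)} = 2"
proof -
  define n where "n = card (orb p x)"
  note enum = orb_enum[OF p, of x, folded n_def]
  have change: "f ((p ^^ j) x) \<noteq> f (inv p ((p ^^ j) x)) \<longleftrightarrow> j = 0 \<or> j = k" if j: "j < n" for j
  proof (cases "j = 0")
    case True
    have "f x = a" "f ((p ^^ (n - 1)) x) = b"
      using f[rule_format, of 0] f[rule_format, of "n - 1"] k by (auto simp: n_def)
    then show ?thesis
      using True \<open>a \<noteq> b\<close> inv_eq_funpow_card[OF p, of x] by (simp add: n_def)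
  next
    case False
    have "f ((p ^^ j) x) = (if j < k then a else b)"
      "f ((p ^^ (j - 1)) x) = (if j - 1 < k then a else b)"
      using f j by (simp_all add: n_def)
    then show ?thesis
      using False \<open>a \<noteq> b\<close> inv_funpow[OF p, of j x] by auto
  qed
  have "{e \<in> orb p x. f e \<noteq> f (inv p e)}
      = (\<lambda>j. (p ^^ j) x) ` {j \<in> {..<n}. f ((p ^^ j) x) \<noteq> f (inv p ((p ^^ j) x))}"
    using enum(4) by (auto simp: n_def)
  also have "{j \<in> {..<n}. f ((p ^^ j) x) \<noteq> f (inv p ((p ^^ j) x))} = {0, k}"
    using change k change[of 0] by (auto simp: n_def)
  finally have "{e \<in> orb p x. f e \<noteq> f (inv p e)} = (\<lambda>j. (p ^^ j) x) ` {0, k}" .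
  moreover have "inj_on (\<lambda>j. (p ^^ j) x) {0, k}"
    by (rule inj_on_subset[OF enum(3)]) (use k n_def in auto)
  ultimately show ?thesis using k by (simp add: card_image)
qed

lemma interval_labeling_of_two_changes:
  assumes p: "permutation p" and x: "x \<in> A" and two: "card {e \<in> orb p x. e \<in> A} = 2"
    and flip: "\<And>e. e \<in> orb p x \<Longrightarrow> f (p e) = (f e \<noteq> (p e \<in> A))"
  shows "\<exists>k. 0 < k \<and> k < card (orb p x) \<and> (p ^^ k) x \<in> A \<and>
           (\<forall>j < card (orb p x). f ((p ^^ j) x) = (if j < k then f x else \<not> f x))"
proof -
  define n where "n = card (orb p x)"
  note enum = orb_enum[OF p, of x, folded n_def]
  define S where "S = {e \<in> orb p x. e \<in> A}"
  have "x \<in> S" unfolding S_def using x by (simp add: orb_self)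
  moreover have "card S = 2" using two S_def by simp
  ultimately obtain y where y: "S = {x, y}" "y \<noteq> x"
    by (metis card_2_iff insert_commute insert_iff singleton_iff)
  then obtain k where k: "k < n" "y = (p ^^ k) x"
    using enum(4) unfolding S_def by blast
  have k0: "k \<noteq> 0" using k y by (metis funpow_0)
  have in_O: "(p ^^ j) x \<in> A \<longleftrightarrow> j = 0 \<or> j = k" if j: "j < n" for j
  proof -
    have "(p ^^ j) x \<in> A \<longleftrightarrow> (p ^^ j) x = (p ^^ 0) x \<or> (p ^^ j) x = (p ^^ k) x"
      using y k funpow_in_orb[of j p x] unfolding S_def by auto
    also have "\<dots> \<longleftrightarrow> j = 0 \<or> j = k"
      using enum(3) j k(1) enum(1) unfolding inj_on_def by blast
    finally show ?thesis .
  qed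
  have "f ((p ^^ j) x) = (if j < k then f x else \<not> f x)" if "j < n" for j
    using that
  proof (induct j)
    case (Suc j)
    have "f ((p ^^ Suc j) x) = (f ((p ^^ j) x) \<noteq> ((p ^^ Suc j) x \<in> A))"
      using flip[OF funpow_in_orb[of j p x]] by simp
    also have "((p ^^ Suc j) x \<in> A) = (Suc j = k)" using in_O[OF Suc(2)] by simp
    finally show ?case using Suc by auto
  qed (use k0 in simp)
  then show ?thesis
    using k0 k in_O[OF k(1)] unfolding n_def by (intro exI[where x=k]) auto
qed

lemma constant_on_orb:
  assumes step: "\<And>e. e \<in> orb p x \<Longrightarrow> f (p e) = f e" and y: "y \<in> orb p x"
  shows "f y = f x"
proof -
  have "f ((p ^^ n) x) = f x" for n
    by (induct n) (simp_all add: step[OF funpow_in_orb])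
  then show ?thesis using y unfolding orb_def by blast
qed

section \<open>Counting over GF(2)\<close>

definition fxor :: "('a \<Rightarrow> bool) \<Rightarrow> ('a \<Rightarrow> bool) \<Rightarrow> 'a \<Rightarrow> bool" where
  "fxor f g = (\<lambda>x. f x \<noteq> g x)"

lemma fxor_apply [simp]: "fxor f g x = (f x \<noteq> g x)"
  by (simp add: fxor_def)

lemma fxor_cancel [simp]: "fxor (fxor f g) g = f" "fxor f (fxor f g) = g"
  by (auto simp: fxor_def)

lemma card_eq_card_kernel_mult_card_image:
  fixes G :: "('a \<Rightarrow> bool) set" and h :: "('a \<Rightarrow> bool) \<Rightarrow> 'b \<Rightarrow> bool"
  assumes fin: "finite G"
    and closed: "\<And>f g. f \<in> G \<Longrightarrow> g \<in> G \<Longrightarrow> fxor f g \<in> G"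
    and hom: "\<And>f g. f \<in> G \<Longrightarrow> g \<in> G \<Longrightarrow> h (fxor f g) = fxor (h f) (h g)"
  shows "card G = card {g \<in> G. h g = (\<lambda>_. False)} * card (h ` G)"
proof -
  define K where "K = {g \<in> G. h g = (\<lambda>_. False)}"
  define r where "r y = (SOME g. g \<in> G \<and> h g = y)" for y
  have r: "r y \<in> G \<and> h (r y) = y" if y: "y \<in> h ` G" for y
  proof -
    obtain g where "g \<in> G" "h g = y" using y by blast
    then show ?thesis unfolding r_def by (rule someI[of "\<lambda>g. g \<in> G \<and> h g = y", OF conjI])
  qed
  have hk: "h (fxor k (r y)) = y" if "k \<in> K" "y \<in> h ` G" for k y
    using that hom[of k "r y"] r[of y] unfolding K_def by auto
  have "bij_betw (\<lambda>(k, y). fxor k (r y)) (K \<times> h ` G) G"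
  proof (rule bij_betwI')
    fix a b assume "a \<in> K \<times> h ` G" "b \<in> K \<times> h ` G"
    then obtain k y k' y' where ab: "a = (k, y)" "b = (k', y')" "k \<in> K" "k' \<in> K"
      "y \<in> h ` G" "y' \<in> h ` G" by blast
    show "((\<lambda>(k, y). fxor k (r y)) a = (\<lambda>(k, y). fxor k (r y)) b) = (a = b)"
    proof
      assume e: "(\<lambda>(k, y). fxor k (r y)) a = (\<lambda>(k, y). fxor k (r y)) b"
      then have e': "fxor k (r y) = fxor k' (r y')" using ab by simp
      then have "y = y'" using hk[of k y] hk[of k' y'] ab by metis
      with e' have "k = k'" by (metis fxor_cancel)
      with \<open>y = y'\<close> show "a = b" using ab by simp
    qed simp
  next
    fix a assume "a \<in> K \<times> h ` G"
    then show "(\<lambda>(k, y). fxor k (r y)) a \<in> G" using closed r unfolding K_def by auto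
  next
    fix g assume g: "g \<in> G"
    then have "r (h g) \<in> G" "h (r (h g)) = h g" using r by auto
    then have "fxor g (r (h g)) \<in> K"
      using g closed hom[of g "r (h g)"] unfolding K_def by (auto simp: fun_eq_iff)
    moreover have "g = fxor (fxor g (r (h g))) (r (h g))" by simp
    ultimately show "\<exists>a \<in> K \<times> h ` G. g = (\<lambda>(k, y). fxor k (r y)) a"
      using g by (intro bexI[of _ "(fxor g (r (h g)), h g)"]) auto
  qed
  then have "card G = card (K \<times> h ` G)" by (simp add: bij_betw_same_card)
  then show ?thesis unfolding K_def by (simp add: card_cartesian_product)
qed

lemma odd_card_xor:
  "finite S \<Longrightarrow> odd (card {x \<in> S. P x \<noteq> Q x}) = (odd (card {x \<in> S. P x}) \<noteq> odd (card {x \<in> S. Q x}))"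
proof (induct S rule: finite_induct)
  case (insert a S)
  have "\<And>R. {x \<in> insert a S. R x} = (if R a then insert a {x \<in> S. R x} else {x \<in> S. R x})"
    by auto
  then show ?case using insert by (auto simp: card_insert_if)
qed simp

lemma card_filter_bij_betw: "bij_betw p S S \<Longrightarrow> card {x \<in> S. g (p x)} = card {x \<in> S. g x}"
  by (rule bij_betw_same_card[of p]) (auto simp: bij_betw_def inj_on_def)

lemma even_card_changes:
  fixes g :: "'a \<Rightarrow> bool"
  assumes "finite S" "bij_betw p S S"
  shows "even (card {x \<in> S. g (p x) \<noteq> g x})"
  using odd_card_xor[OF assms(1), of "\<lambda>x. g (p x)" g] card_filter_bij_betw[OF assms(2)] by simp

lemma card_bool_funs_supported:
  assumes "finite A" shows "card {l. \<forall>x. l x \<longrightarrow> x \<in> A} = 2 ^ card A"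
proof -
  have "bij_betw Collect {l. \<forall>x. l x \<longrightarrow> x \<in> A} (Pow A)"
    by (rule bij_betwI[where g="\<lambda>B x. x \<in> B"]) auto
  then show ?thesis using assms by (simp add: bij_betw_same_card card_Pow)
qed

section \<open>Plane maps have no first cohomology\<close>

lemma card_Inl_Un_Inr: "finite A \<Longrightarrow> finite B \<Longrightarrow> card (Inl ` A \<union> Inr ` B) = card A + card B"
  by (subst card_Un_disjoint) (auto simp: card_image)

locale plane_map =
  fixes D :: "'d set" and alpha sigma :: "'d \<Rightarrow> 'd"
  assumes finite_darts: "finite D"
    and alpha_permutes: "alpha permutes D" and sigma_permutes: "sigma permutes D"
    and alpha_involution: "d \<in> D \<Longrightarrow> alpha (alpha d) = d"
    and alpha_no_fixpoint: "d \<in> D \<Longrightarrow> alpha d \<noteq> d"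
    and connected: "map_connected D alpha sigma"
    and euler: "int (card (map_vertices D sigma)) - int (card (map_edges D alpha))
                  + int (card (map_faces D alpha sigma)) = 2"
begin

abbreviation "phi \<equiv> face_perm alpha sigma"
abbreviation "vertices \<equiv> map_vertices D sigma"
abbreviation "edges \<equiv> map_edges D alpha"
abbreviation "faces \<equiv> map_faces D alpha sigma"

lemma alpha_alpha [simp]: "alpha (alpha d) = d"
  using alpha_involution permutes_not_in[OF alpha_permutes] by (cases "d \<in> D") auto

lemma phi_apply: "phi d = sigma (alpha d)"
  by (simp add: face_perm_def)

lemma sigma_eq_phi_alpha: "sigma d = phi (alpha d)"
  by (simp add: phi_apply)

lemma phi_permutes: "phi permutes D"
proof -
  have "phi = sigma \<circ> alpha" by (auto simp: face_perm_def)
  then show ?thesis using permutes_compose[OF alpha_permutes sigma_permutes] by simp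
qed

lemma permutation_sigma: "permutation sigma"
  using finite_darts sigma_permutes permutation_permutes by blast

lemma permutation_phi: "permutation phi"
  using finite_darts phi_permutes permutation_permutes by blast

lemma alpha_in_iff [simp]: "alpha d \<in> D \<longleftrightarrow> d \<in> D"
  using permutes_in_image[OF alpha_permutes] .

lemma sigma_in_iff [simp]: "sigma d \<in> D \<longleftrightarrow> d \<in> D"
  using permutes_in_image[OF sigma_permutes] .

lemma phi_in_iff [simp]: "phi d \<in> D \<longleftrightarrow> d \<in> D"
  using permutes_in_image[OF phi_permutes] .

lemma inv_sigma_in_iff [simp]: "inv sigma d \<in> D \<longleftrightarrow> d \<in> D"
  using permutes_in_image[OF permutes_inv[OF sigma_permutes]] .

lemma sigma_inv_sigma [simp]: "sigma (inv sigma d) = d"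
  using permutes_inverses(1)[OF sigma_permutes] .

lemma inv_sigma_sigma [simp]: "inv sigma (sigma d) = d"
  using permutes_inverses(2)[OF sigma_permutes] .

lemma connected_induct [consumes 2, case_names root alpha sigma]:
  assumes "d \<in> D" and "d0 \<in> D" "P d0"
    and "\<And>d. d \<in> D \<Longrightarrow> P d \<Longrightarrow> P (alpha d)" "\<And>d. d \<in> D \<Longrightarrow> P d \<Longrightarrow> P (sigma d)"
  shows "P d"
proof -
  let ?R = "{(x, alpha x) | x. x \<in> D} \<union> {(x, sigma x) | x. x \<in> D}"
  have "(d0, d) \<in> ?R\<^sup>*" using connected assms(1,2) unfolding map_connected_def by blast
  then show ?thesis
    by (induct rule: rtrancl_induct) (use assms(3-5) in blast)+
qed

lemma connected_constant:
  assumes "\<And>d. d \<in> D \<Longrightarrow> f (alpha d) = f d" "\<And>d. d \<in> D \<Longrightarrow> f (sigma d) = f d"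
    and "d \<in> D" "d0 \<in> D"
  shows "f d = f d0"
  by (rule connected_induct[of d d0 "\<lambda>x. f x = f d0"]) (use assms in auto)

lemma vertexI: "d \<in> D \<Longrightarrow> orb sigma d \<in> vertices"
  unfolding map_vertices_def by blast

lemma faceI: "d \<in> D \<Longrightarrow> orb phi d \<in> faces"
  unfolding map_faces_def by blast

lemma edgeI: "d \<in> D \<Longrightarrow> {d, alpha d} \<in> edges"
  unfolding map_edges_def by blast

lemma mem_vertex_iff: "v \<in> vertices \<Longrightarrow> d \<in> v \<longleftrightarrow> v = orb sigma d"
  unfolding map_vertices_def using orb_eq_iff[OF permutation_sigma] by blast

lemma mem_face_iff: "P \<in> faces \<Longrightarrow> d \<in> P \<longleftrightarrow> P = orb phi d"
  unfolding map_faces_def using orb_eq_iff[OF permutation_phi] by blast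

lemma vertex_subset: "v \<in> vertices \<Longrightarrow> v \<subseteq> D"
  unfolding map_vertices_def using orb_subset[OF sigma_permutes] by blast

lemma face_subset: "P \<in> faces \<Longrightarrow> P \<subseteq> D"
  unfolding map_faces_def using orb_subset[OF phi_permutes] by blast

lemma finite_vertices: "finite vertices"
  unfolding map_vertices_def using finite_darts by simp

lemma finite_edges: "finite edges"
  unfolding map_edges_def using finite_darts by simp

lemma finite_faces: "finite faces"
  unfolding map_faces_def using finite_darts by simp

lemma card_darts_eq_twice_edges: "card D = 2 * card edges"
proof -
  have edge_eq: "{d, alpha d} = {x, alpha x}" if "x \<in> {d, alpha d}" for d x
    using that by auto
  have "2 * card edges = card (\<Union>edges)"
  proof (rule card_partition)
    show "finite (\<Union>edges)" unfolding map_edges_def using finite_darts by auto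
    show "card e = 2" if "e \<in> edges" for e
      using that alpha_no_fixpoint unfolding map_edges_def by (auto simp: card_2_iff)
    show "e \<inter> e' = {}" if "e \<in> edges" "e' \<in> edges" "e \<noteq> e'" for e e'
      using that edge_eq unfolding map_edges_def by blast
  qed (rule finite_edges)
  moreover have "\<Union>edges = D" unfolding map_edges_def by auto
  ultimately show ?thesis by simp
qed

lemma card_eq_sum_over_vertices:
  assumes A: "A \<subseteq> D" shows "card A = (\<Sum>v \<in> vertices. card (v \<inter> A))"
proof -
  have "A = (\<Union>v \<in> vertices. v \<inter> A)"
  proof
    show "A \<subseteq> (\<Union>v \<in> vertices. v \<inter> A)"
    proof
      fix d assume "d \<in> A"
      then show "d \<in> (\<Union>v \<in> vertices. v \<inter> A)"
        using A vertexI[of d] orb_self[of d sigma] by blast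
    qed
  qed blast
  moreover have "card (\<Union>v \<in> vertices. v \<inter> A) = (\<Sum>v \<in> vertices. card (v \<inter> A))"
  proof (rule card_UN_disjoint[OF finite_vertices])
    show "\<forall>v \<in> vertices. finite (v \<inter> A)"
      using finite_subset[OF A finite_darts] by blast
    show "\<forall>v \<in> vertices. \<forall>v' \<in> vertices. v \<noteq> v' \<longrightarrow> (v \<inter> A) \<inter> (v' \<inter> A) = {}"
      using mem_vertex_iff by blast
  qed
  ultimately show ?thesis by simp
qed

lemma darts_nonempty: "D \<noteq> {}"
  using euler unfolding map_vertices_def map_edges_def map_faces_def by auto

text \<open>The cochain complex over GF(2) of the cell decomposition of the sphere whose 0-cells
  are the darts: the 1-cells join \<open>d\<close> to \<open>sigma d\<close> (indexed by \<open>Inl d\<close>) and the two darts of an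
  edge (indexed by \<open>Inr e\<close>); the 2-cells are the vertices, bounded by the \<open>sigma\<close>-cycles, and the
  faces, bounded by the closed walks \<open>d, alpha d, phi d, alpha (phi d), \<dots>\<close>.  Its Euler
  characteristic is that of the map, so Euler's formula makes its first cohomology vanish.\<close>

definition cochains0 :: "('d \<Rightarrow> bool) set" where
  "cochains0 = {l. \<forall>x. l x \<longrightarrow> x \<in> D}"

definition cochains1 :: "('d + 'd set \<Rightarrow> bool) set" where
  "cochains1 = {w. \<forall>c. w c \<longrightarrow> c \<in> Inl ` D \<union> Inr ` edges}"

definition coboundary0 :: "('d \<Rightarrow> bool) \<Rightarrow> 'd + 'd set \<Rightarrow> bool" where
  "coboundary0 l = (\<lambda>c. case c of
      Inl d \<Rightarrow> d \<in> D \<and> l (sigma d) \<noteq> l d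
    | Inr e \<Rightarrow> e \<in> edges \<and> odd (card {d \<in> e. l d}))"

definition coboundary1 :: "('d + 'd set \<Rightarrow> bool) \<Rightarrow> 'd set + 'd set \<Rightarrow> bool" where
  "coboundary1 w = (\<lambda>c. case c of
      Inl v \<Rightarrow> v \<in> vertices \<and> odd (card {d \<in> v. w (Inl d)})
    | Inr P \<Rightarrow> P \<in> faces \<and> odd (card {d \<in> P. w (Inr {d, alpha d}) \<noteq> w (Inl (alpha d))}))"

definition cocycles1 :: "('d + 'd set \<Rightarrow> bool) set" where
  "cocycles1 = {w \<in> cochains1. coboundary1 w = (\<lambda>_. False)}"

lemma odd_card_edge:
  assumes "d \<in> D" shows "odd (card {x \<in> {d, alpha d}. l x}) \<longleftrightarrow> l (alpha d) \<noteq> l d"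
proof -
  have "{x \<in> {d, alpha d}. l x} = (if l d then {d} else {}) \<union> (if l (alpha d) then {alpha d} else {})"
    by auto
  then show ?thesis using alpha_no_fixpoint[OF assms] by auto
qed

lemma coboundary0_dart:
  assumes "d \<in> D"
  shows "coboundary0 l (Inl d) = (l (sigma d) \<noteq> l d)"
    "coboundary0 l (Inr {d, alpha d}) = (l (alpha d) \<noteq> l d)"
  using assms odd_card_edge[OF assms] edgeI[OF assms] unfolding coboundary0_def by simp_all

lemma coboundary0_fxor: "coboundary0 (fxor l l') = fxor (coboundary0 l) (coboundary0 l')"
proof
  fix c show "coboundary0 (fxor l l') c = fxor (coboundary0 l) (coboundary0 l') c"
  proof (cases c)
    case (Inr e)
    have "finite e" if "e \<in> edges" using that unfolding map_edges_def by auto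
    then show ?thesis
      using Inr odd_card_xor[of e l l'] unfolding coboundary0_def by auto
  qed (auto simp: coboundary0_def)
qed

lemma card_cochains0: "card cochains0 = 2 ^ card D"
  unfolding cochains0_def using card_bool_funs_supported[OF finite_darts] .

lemma finite_cochains0: "finite cochains0"
  using card_cochains0 card.infinite by force

lemma kernel_coboundary0:
  "{l \<in> cochains0. coboundary0 l = (\<lambda>_. False)} = {(\<lambda>_. False), (\<lambda>x. x \<in> D)}"
proof (intro set_eqI iffI)
  fix l assume "l \<in> {l \<in> cochains0. coboundary0 l = (\<lambda>_. False)}"
  then have l: "l \<in> cochains0" "coboundary0 l = (\<lambda>_. False)" by auto
  have l_sigma: "l (sigma d) = l d" and l_alpha: "l (alpha d) = l d" if "d \<in> D" for d
    using fun_cong[OF l(2), of "Inl d"] fun_cong[OF l(2), of "Inr {d, alpha d}"]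
      coboundary0_dart[OF that] by auto
  obtain d0 where d0: "d0 \<in> D" using darts_nonempty by blast
  have "l d = l d0" if "d \<in> D" for d
    using connected_constant[of l, OF l_alpha l_sigma that d0] .
  then have "l = (\<lambda>_. False) \<or> l = (\<lambda>x. x \<in> D)"
    using l(1) unfolding cochains0_def by (cases "l d0") auto
  then show "l \<in> {(\<lambda>_. False), (\<lambda>x. x \<in> D)}" by simp
next
  fix l assume "l \<in> {(\<lambda>_. False), (\<lambda>x. x \<in> D)}"
  moreover have "card {d \<in> e. True} = 2" if "e \<in> edges" for e
    using that alpha_no_fixpoint unfolding map_edges_def by (auto simp: card_2_iff)
  moreover have "{d \<in> e. d \<in> D} = {d \<in> e. True}" if "e \<in> edges" for e
    using that unfolding map_edges_def by auto
  ultimately show "l \<in> {l \<in> cochains0. coboundary0 l = (\<lambda>_. False)}"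
    unfolding cochains0_def coboundary0_def by (auto simp: fun_eq_iff split: sum.split)
qed

lemma card_coboundaries0: "2 * card (coboundary0 ` cochains0) = 2 ^ card D"
proof -
  have "card cochains0 = card {l \<in> cochains0. coboundary0 l = (\<lambda>_. False)} * card (coboundary0 ` cochains0)"
    by (rule card_eq_card_kernel_mult_card_image[OF finite_cochains0 _ coboundary0_fxor])
      (auto simp: cochains0_def)
  moreover have "(\<lambda>_. False) \<noteq> (\<lambda>x. x \<in> D)" using darts_nonempty by (auto simp: fun_eq_iff)
  ultimately show ?thesis using card_cochains0 kernel_coboundary0 by simp
qed

lemma coboundary1_fxor: "coboundary1 (fxor w w') = fxor (coboundary1 w) (coboundary1 w')"
proof
  fix c show "coboundary1 (fxor w w') c = fxor (coboundary1 w) (coboundary1 w') c"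
  proof (cases c)
    case (Inl v)
    have "finite v" if "v \<in> vertices"
      using that vertex_subset finite_darts finite_subset by blast
    then show ?thesis
      using Inl odd_card_xor[of v "\<lambda>d. w (Inl d)" "\<lambda>d. w' (Inl d)"]
      unfolding coboundary1_def by auto
  next
    case (Inr P)
    have "finite P" if "P \<in> faces"
      using that face_subset finite_darts finite_subset by blast
    moreover have "{d \<in> P. (w (Inr {d, alpha d}) \<noteq> w' (Inr {d, alpha d})) \<noteq> (w (Inl (alpha d)) \<noteq> w' (Inl (alpha d)))}
        = {d \<in> P. (w (Inr {d, alpha d}) \<noteq> w (Inl (alpha d))) \<noteq> (w' (Inr {d, alpha d}) \<noteq> w' (Inl (alpha d)))}"
      by auto
    ultimately show ?thesis
      using Inr odd_card_xor[of P "\<lambda>d. w (Inr {d, alpha d}) \<noteq> w (Inl (alpha d))"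
          "\<lambda>d. w' (Inr {d, alpha d}) \<noteq> w' (Inl (alpha d))"]
      unfolding coboundary1_def by auto
  qed
qed

lemma card_cochains1: "card cochains1 = 2 ^ (card D + card edges)"
proof -
  have "card (Inl ` D \<union> Inr ` edges :: ('d + 'd set) set) = card D + card edges"
    using finite_darts finite_edges by (rule card_Inl_Un_Inr)
  moreover have "finite (Inl ` D \<union> Inr ` edges :: ('d + 'd set) set)"
    using finite_darts finite_edges by simp
  ultimately show ?thesis
    unfolding cochains1_def using card_bool_funs_supported by metis
qed

lemma finite_cochains1: "finite cochains1"
  using card_cochains1 card.infinite by force

lemma fxor_in_cochains1: "w \<in> cochains1 \<Longrightarrow> w' \<in> cochains1 \<Longrightarrow> fxor w w' \<in> cochains1"
  unfolding cochains1_def by auto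

lemma coboundary0_in_cochains1: "coboundary0 l \<in> cochains1"
  unfolding cochains1_def coboundary0_def by (auto split: sum.splits)

lemma coboundary1_coboundary0: "coboundary1 (coboundary0 l) = (\<lambda>_. False)"
proof
  fix c show "coboundary1 (coboundary0 l) c = False"
  proof (cases c)
    case (Inl v)
    have "even (card {d \<in> v. coboundary0 l (Inl d)})" if v: "v \<in> vertices"
    proof -
      obtain x where "v = orb sigma x" using v unfolding map_vertices_def by blast
      then have "even (card {d \<in> v. l (sigma d) \<noteq> l d})"
        using even_card_changes[OF finite_orb bij_betw_orb, OF permutation_sigma permutation_sigma]
        by simp
      moreover have "{d \<in> v. coboundary0 l (Inl d)} = {d \<in> v. l (sigma d) \<noteq> l d}"
        using vertex_subset[OF v] coboundary0_dart by blast
      ultimately show ?thesis by simp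
    qed
    then show ?thesis using Inl unfolding coboundary1_def by auto
  next
    case (Inr P)
    have "even (card {d \<in> P. coboundary0 l (Inr {d, alpha d}) \<noteq> coboundary0 l (Inl (alpha d))})"
      if P: "P \<in> faces"
    proof -
      obtain x where "P = orb phi x" using P unfolding map_faces_def by blast
      then have "even (card {d \<in> P. l (phi d) \<noteq> l d})"
        using even_card_changes[OF finite_orb bij_betw_orb, OF permutation_phi permutation_phi]
        by simp
      moreover have "{d \<in> P. coboundary0 l (Inr {d, alpha d}) \<noteq> coboundary0 l (Inl (alpha d))}
          = {d \<in> P. l (phi d) \<noteq> l d}"
      proof (rule Collect_cong)
        fix d
        have "d \<in> D" if "d \<in> P" using that face_subset[OF P] by blast
        then show "(d \<in> P \<and> coboundary0 l (Inr {d, alpha d}) \<noteq> coboundary0 l (Inl (alpha d)))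
            = (d \<in> P \<and> l (phi d) \<noteq> l d)"
          by (auto simp: coboundary0_dart phi_apply)
      qed
      ultimately show ?thesis by simp
    qed
    then show ?thesis using Inr unfolding coboundary1_def by auto
  qed
qed

lemma coboundary1_dart_indicator:
  assumes d: "d \<in> D"
  shows "coboundary1 (\<lambda>c. c = Inl d) = fxor (\<lambda>c. c = Inl (orb sigma d)) (\<lambda>c. c = Inr (orb phi (alpha d)))"
proof
  fix c show "coboundary1 (\<lambda>c. c = Inl d) c = fxor (\<lambda>c. c = Inl (orb sigma d)) (\<lambda>c. c = Inr (orb phi (alpha d))) c"
  proof (cases c)
    case (Inl v)
    have "{x \<in> v. x = d} = (if d \<in> v then {d} else {})" by auto
    moreover have "v \<in> vertices \<Longrightarrow> d \<in> v \<longleftrightarrow> v = orb sigma d" by (rule mem_vertex_iff)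
    ultimately show ?thesis using Inl vertexI[OF d] unfolding coboundary1_def by auto
  next
    case (Inr P)
    have "{x \<in> P. alpha x = d} = (if alpha d \<in> P then {alpha d} else {})" by auto
    moreover have "P \<in> faces \<Longrightarrow> alpha d \<in> P \<longleftrightarrow> P = orb phi (alpha d)" by (rule mem_face_iff)
    ultimately show ?thesis using Inr faceI d unfolding coboundary1_def by auto
  qed
qed

lemma coboundary1_edge_indicator:
  assumes d: "d \<in> D"
  shows "coboundary1 (\<lambda>c. c = Inr {d, alpha d})
           = fxor (\<lambda>c. c = Inr (orb phi d)) (\<lambda>c. c = Inr (orb phi (alpha d)))"
proof
  fix c show "coboundary1 (\<lambda>c. c = Inr {d, alpha d}) c
      = fxor (\<lambda>c. c = Inr (orb phi d)) (\<lambda>c. c = Inr (orb phi (alpha d))) c"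
  proof (cases c)
    case (Inr P)
    have "{x \<in> P. {x, alpha x} = {d, alpha d}} = {x \<in> {d, alpha d}. x \<in> P}"
      by (auto simp: doubleton_eq_iff)
    then have odd: "odd (card {x \<in> P. {x, alpha x} = {d, alpha d}}) \<longleftrightarrow> (alpha d \<in> P) \<noteq> (d \<in> P)"
      using odd_card_edge[OF d, of "\<lambda>x. x \<in> P"] by simp
    show ?thesis
    proof (cases "P \<in> faces")
      case True
      then have "d \<in> P \<longleftrightarrow> P = orb phi d" "alpha d \<in> P \<longleftrightarrow> P = orb phi (alpha d)"
        using mem_face_iff by blast+
      then show ?thesis using Inr True odd unfolding coboundary1_def by auto
    next
      case False
      then show ?thesis using Inr faceI d by (auto simp: coboundary1_def)
    qed
  qed (simp add: coboundary1_def)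
qed

lemma coboundary1_zero: "coboundary1 (\<lambda>_. False) = (\<lambda>_. False)"
  unfolding coboundary1_def by (auto split: sum.split)

text \<open>Every 2-cochain agrees with a coboundary outside any one face (lemma
  \<open>indicator_in_coboundaries_off\<close>), so the coboundaries have codimension at most one.\<close>

definition coboundaries_off :: "'d set \<Rightarrow> ('d set + 'd set \<Rightarrow> bool) set" where
  "coboundaries_off P0 = {u. \<exists>w \<in> cochains1. \<forall>c. c \<noteq> Inr P0 \<longrightarrow> coboundary1 w c = u c}"

lemma fxor_in_coboundaries_off:
  assumes "u \<in> coboundaries_off P0" "u' \<in> coboundaries_off P0"
  shows "fxor u u' \<in> coboundaries_off P0"
proof -
  obtain w w' where "w \<in> cochains1" "w' \<in> cochains1"
    "\<forall>c. c \<noteq> Inr P0 \<longrightarrow> coboundary1 w c = u c" "\<forall>c. c \<noteq> Inr P0 \<longrightarrow> coboundary1 w' c = u' c"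
    using assms unfolding coboundaries_off_def by blast
  then show ?thesis
    unfolding coboundaries_off_def
    by (intro CollectI bexI[of _ "fxor w w'"]) (auto simp: coboundary1_fxor fxor_in_cochains1)
qed

lemma coboundary1_in_coboundaries_off: "w \<in> cochains1 \<Longrightarrow> coboundary1 w \<in> coboundaries_off P0"
  unfolding coboundaries_off_def by blast

lemma face_indicator_in_coboundaries_off:
  assumes "d \<in> D" "d0 \<in> D"
  shows "(\<lambda>c. c = Inr (orb phi d)) \<in> coboundaries_off (orb phi d0)"
proof -
  have across_edge: "(\<lambda>c. c = Inr (orb phi (alpha d))) \<in> coboundaries_off (orb phi d0)"
    if d: "d \<in> D" and IH: "(\<lambda>c. c = Inr (orb phi d)) \<in> coboundaries_off (orb phi d0)" for d
  proof -
    have "(\<lambda>c. c = Inr {d, alpha d}) \<in> cochains1"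
      unfolding cochains1_def using edgeI[OF d] by auto
    then have "fxor (\<lambda>c. c = Inr (orb phi d)) (coboundary1 (\<lambda>c. c = Inr {d, alpha d}))
        \<in> coboundaries_off (orb phi d0)"
      using IH by (intro fxor_in_coboundaries_off coboundary1_in_coboundaries_off)
    then show ?thesis using coboundary1_edge_indicator[OF d] by simp
  qed
  show ?thesis
    using assms
  proof (induct rule: connected_induct)
    case root
    show ?case
      unfolding coboundaries_off_def cochains1_def
      by (intro CollectI bexI[of _ "\<lambda>_. False"]) (auto simp: coboundary1_zero)
  next
    case (alpha d)
    then show ?case by (rule across_edge)
  next
    case (sigma d)
    have "orb phi (sigma d) = orb phi (alpha d)"
      using sigma_eq_phi_alpha orb_step[OF permutation_phi] by metis
    then show ?case using across_edge[OF sigma] by simp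
  qed
qed

lemma vertex_indicator_in_coboundaries_off:
  assumes d: "d \<in> D" and d0: "d0 \<in> D"
  shows "(\<lambda>c. c = Inl (orb sigma d)) \<in> coboundaries_off (orb phi d0)"
proof -
  have "(\<lambda>c. c = Inl d) \<in> cochains1" unfolding cochains1_def using d by auto
  then have "fxor (coboundary1 (\<lambda>c. c = Inl d)) (\<lambda>c. c = Inr (orb phi (alpha d)))
      \<in> coboundaries_off (orb phi d0)"
    using d d0 by (intro fxor_in_coboundaries_off coboundary1_in_coboundaries_off
        face_indicator_in_coboundaries_off) auto
  then show ?thesis using coboundary1_dart_indicator[OF d] by (simp add: fun_eq_iff)
qed

lemma indicator_in_coboundaries_off:
  assumes "finite A" "A \<subseteq> Inl ` vertices \<union> Inr ` faces" and d0: "d0 \<in> D"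
  shows "(\<lambda>c. c \<in> A) \<in> coboundaries_off (orb phi d0)"
  using assms(1,2)
proof (induct A rule: finite_induct)
  case empty
  show ?case
    unfolding coboundaries_off_def cochains1_def
    by (intro CollectI bexI[of _ "\<lambda>_. False"]) (auto simp: coboundary1_zero)
next
  case (insert a A)
  have "(\<lambda>c. c = a) \<in> coboundaries_off (orb phi d0)"
    using insert(4) vertex_indicator_in_coboundaries_off face_indicator_in_coboundaries_off d0
    unfolding map_vertices_def map_faces_def by blast
  then have "fxor (\<lambda>c. c \<in> A) (\<lambda>c. c = a) \<in> coboundaries_off (orb phi d0)"
    using insert by (intro fxor_in_coboundaries_off) auto
  moreover have "fxor (\<lambda>c. c \<in> A) (\<lambda>c. c = a) = (\<lambda>c. c \<in> insert a A)"
    using insert(2) by (auto simp: fun_eq_iff)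
  ultimately show ?case by simp
qed

lemma card_coboundaries1: "2 ^ (card vertices + card faces) \<le> 2 * card (coboundary1 ` cochains1)"
proof -
  obtain d0 where d0: "d0 \<in> D" using darts_nonempty by blast
  define B where "B = coboundary1 ` cochains1"
  define flip :: "('d set + 'd set \<Rightarrow> bool) \<Rightarrow> _"
    where "flip u = fxor u (\<lambda>c. c = Inr (orb phi d0))" for u
  define cells where "cells = (Inl ` vertices \<union> Inr ` faces :: ('d set + 'd set) set)"
  have fin: "finite cells" unfolding cells_def using finite_vertices finite_faces by simp
  have "{u. \<forall>c. u c \<longrightarrow> c \<in> cells} \<subseteq> B \<union> flip ` B"
  proof
    fix u assume "u \<in> {u. \<forall>c. u c \<longrightarrow> c \<in> cells}"
    then have "{c. u c} \<subseteq> cells" by auto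
    then have "finite {c. u c}" using fin finite_subset by blast
    with \<open>{c. u c} \<subseteq> cells\<close> have "(\<lambda>c. c \<in> {c. u c}) \<in> coboundaries_off (orb phi d0)"
      unfolding cells_def by (intro indicator_in_coboundaries_off d0)
    then obtain w where w: "w \<in> cochains1" "\<forall>c. c \<noteq> Inr (orb phi d0) \<longrightarrow> coboundary1 w c = u c"
      unfolding coboundaries_off_def by auto
    then have "u c = (if u (Inr (orb phi d0)) = coboundary1 w (Inr (orb phi d0))
        then coboundary1 w else flip (coboundary1 w)) c" for c
      unfolding flip_def by (cases "c = Inr (orb phi d0)") auto
    then have "u = (if u (Inr (orb phi d0)) = coboundary1 w (Inr (orb phi d0))
        then coboundary1 w else flip (coboundary1 w))" ..
    then have "u = coboundary1 w \<or> u = flip (coboundary1 w)"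
      by (simp split: if_split_asm)
    then show "u \<in> B \<union> flip ` B" using w(1) unfolding B_def by blast
  qed
  then have "card {u. \<forall>c. u c \<longrightarrow> c \<in> cells} \<le> card (B \<union> flip ` B)"
    by (intro card_mono) (simp_all add: B_def finite_cochains1)
  also have "\<dots> \<le> card B + card (flip ` B)" by (rule card_Un_le)
  also have "\<dots> \<le> 2 * card B" using card_image_le[of B flip] B_def finite_cochains1 by simp
  finally show ?thesis
    using card_bool_funs_supported[OF fin] unfolding cells_def B_def
    by (simp add: card_Inl_Un_Inr finite_vertices finite_faces)
qed

theorem cocycles_eq_coboundaries: "cocycles1 = coboundary0 ` cochains0"
proof -
  have sub: "coboundary0 ` cochains0 \<subseteq> cocycles1"
    unfolding cocycles1_def using coboundary0_in_cochains1 coboundary1_coboundary0 by auto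
  have "card cochains1 = card cocycles1 * card (coboundary1 ` cochains1)"
    unfolding cocycles1_def
    by (rule card_eq_card_kernel_mult_card_image[OF finite_cochains1 fxor_in_cochains1 coboundary1_fxor])
  then have "card cocycles1 * 2 ^ (card vertices + card faces) \<le> 2 * 2 ^ (card D + card edges)"
    using card_coboundaries1 card_cochains1 by (metis mult.left_commute mult_le_mono2)
  moreover have "card vertices + card faces = card edges + 2" using euler by linarith
  ultimately have "(2 * card cocycles1) * 2 ^ (card edges + 1) \<le> 2 ^ card D * 2 ^ (card edges + 1)"
    by (simp add: power_add mult_ac)
  then have "card cocycles1 \<le> card (coboundary0 ` cochains0)"
    using card_coboundaries0 by simp
  moreover have "finite cocycles1" unfolding cocycles1_def using finite_cochains1 by simp
  ultimately show ?thesis using card_seteq[OF _ sub] by blast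
qed

theorem cocycle_is_coboundary:
  assumes sym: "\<And>d. d \<in> D \<Longrightarrow> a (alpha d) = a d"
    and vertex: "\<And>v. v \<in> vertices \<Longrightarrow> even (card {d \<in> v. s d})"
    and face: "\<And>P. P \<in> faces \<Longrightarrow> even (card {d \<in> P. a d \<noteq> s (alpha d)})"
  shows "\<exists>l. \<forall>d \<in> D. l (sigma d) = (l d \<noteq> s d) \<and> l (alpha d) = (l d \<noteq> a d)"
proof -
  define w where "w c = (case c of Inl d \<Rightarrow> d \<in> D \<and> s d | Inr e \<Rightarrow> e \<in> edges \<and> (\<forall>d \<in> e. a d))" for c
  have w_dart: "w (Inl d) = s d" "w (Inr {d, alpha d}) = a d" if "d \<in> D" for d
    using that sym edgeI unfolding w_def by auto
  have "coboundary1 w = (\<lambda>_. False)"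
  proof
    fix c show "coboundary1 w c = False"
    proof (cases c)
      case (Inl v)
      have "{d \<in> v. w (Inl d)} = {d \<in> v. s d}" if "v \<in> vertices"
        using that vertex_subset w_dart by blast
      then show ?thesis using Inl vertex unfolding coboundary1_def by auto
    next
      case (Inr P)
      have "{d \<in> P. w (Inr {d, alpha d}) \<noteq> w (Inl (alpha d))} = {d \<in> P. a d \<noteq> s (alpha d)}"
        if "P \<in> faces" using that face_subset w_dart by (blast intro: alpha_in_iff[THEN iffD2])
      then show ?thesis using Inr face unfolding coboundary1_def by auto
    qed
  qed
  moreover have "w \<in> cochains1" unfolding cochains1_def w_def by (auto split: sum.splits)
  ultimately have "w \<in> coboundary0 ` cochains0"
    using cocycles_eq_coboundaries unfolding cocycles1_def by blast
  then obtain l where "w = coboundary0 l" by blast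
  then have "l (sigma d) = (l d \<noteq> s d) \<and> l (alpha d) = (l d \<noteq> a d)" if "d \<in> D" for d
    using w_dart[OF that] coboundary0_dart[OF that, of l] by auto
  then show ?thesis by blast
qed

end

section \<open>Quadrangulations, 2-orientations and strong labelings\<close>

locale quadrangulation = plane_map D alpha sigma
  for D :: "'d set" and alpha sigma :: "'d \<Rightarrow> 'd" +
  fixes z :: 'd
  assumes root_in_darts: "z \<in> D"
    and quadrangular_faces: "P \<in> map_faces D alpha sigma \<Longrightarrow> card P = 4 \<and> card (orb sigma ` P) = 4"

lemma quadrangulation_if_is_quadrangulation:
  "is_quadrangulation D alpha sigma z \<Longrightarrow> quadrangulation D alpha sigma z"
  unfolding is_quadrangulation_def by unfold_locales auto

context quadrangulation
begin

abbreviation "s0 \<equiv> orb sigma z"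
abbreviation "s1 \<equiv> orb sigma ((phi ^^ 2) z)"

lemma card_face: "d \<in> D \<Longrightarrow> card (orb phi d) = 4"
  using quadrangular_faces faceI by blast

lemma phi_funpow_4 [simp]: "d \<in> D \<Longrightarrow> (phi ^^ 4) d = d"
  using orb_enum(2)[OF permutation_phi, of d] card_face by simp

lemma phi_funpow_in_iff [simp]: "(phi ^^ n) d \<in> D \<longleftrightarrow> d \<in> D"
  by (induct n) simp_all

lemma face_enum: "d \<in> D \<Longrightarrow> orb phi d = {d, phi d, (phi ^^ 2) d, (phi ^^ 3) d}"
proof -
  assume d: "d \<in> D"
  have "{..<4::nat} = {0, 1, 2, 3}" by auto
  then show ?thesis
    using orb_enum(4)[OF permutation_phi, of d] card_face[OF d] by (simp add: numeral_eq_Suc)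
qed

lemma face_distinct:
  "d \<in> D \<Longrightarrow> j < 4 \<Longrightarrow> k < 4 \<Longrightarrow> (phi ^^ j) d = (phi ^^ k) d \<Longrightarrow> j = k"
  using orb_enum(3)[OF permutation_phi, of d] card_face unfolding inj_on_def by auto

lemma card_darts_eq_4_faces: "card D = 4 * card faces"
proof -
  have "4 * card faces = card (\<Union>faces)"
  proof (rule card_partition)
    show "finite (\<Union>faces)" using finite_faces face_subset finite_darts finite_subset
      by (metis Union_least)
    show "card P = 4" if "P \<in> faces" for P using that quadrangular_faces by blast
    show "P \<inter> P' = {}" if "P \<in> faces" "P' \<in> faces" "P \<noteq> P'" for P P'
      using that mem_face_iff by blast
  qed (rule finite_faces)
  moreover have "\<Union>faces = D"
  proof
    show "\<Union>faces \<subseteq> D" using face_subset by blast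
    show "D \<subseteq> \<Union>faces"
    proof
      fix d assume "d \<in> D"
      then show "d \<in> \<Union>faces" using faceI[of d] orb_self[of d phi] by blast
    qed
  qed
  ultimately show ?thesis by simp
qed

lemma card_edges_eq: "card edges = 2 * card faces"
  using card_darts_eq_4_faces card_darts_eq_twice_edges by simp

lemma card_vertices_eq: "card vertices = card faces + 2"
  using euler card_edges_eq by linarith

text \<open>\<open>black d\<close> holds iff the tail of \<open>d\<close> is black in the proper 2-colouring of the
  vertices with \<open>s0\<close> black; it exists because all faces have even length.\<close>

definition black :: "'d \<Rightarrow> bool" where
  "black = (SOME bl. (\<forall>d \<in> D. bl (sigma d) = bl d \<and> bl (alpha d) = (\<not> bl d)) \<and> bl z)"

lemma black_spec: "(\<forall>d \<in> D. black (sigma d) = black d \<and> black (alpha d) = (\<not> black d)) \<and> black z"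
proof -
  have "\<exists>bl. \<forall>d \<in> D. bl (sigma d) = (bl d \<noteq> False) \<and> bl (alpha d) = (bl d \<noteq> True)"
    by (rule cocycle_is_coboundary) (use quadrangular_faces in auto)
  then obtain bl where bl: "\<forall>d \<in> D. bl (sigma d) = bl d \<and> bl (alpha d) = (\<not> bl d)" by auto
  then have "\<exists>bl. (\<forall>d \<in> D. bl (sigma d) = bl d \<and> bl (alpha d) = (\<not> bl d)) \<and> bl z"
    by (cases "bl z") (auto intro: exI[of _ bl] exI[of _ "\<lambda>d. \<not> bl d"])
  then show ?thesis unfolding black_def by (rule someI_ex)
qed

lemma black_sigma: "d \<in> D \<Longrightarrow> black (sigma d) = black d"
  using black_spec by blast

lemma black_alpha: "d \<in> D \<Longrightarrow> black (alpha d) = (\<not> black d)"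
  using black_spec by blast

lemma black_root: "black z"
  using black_spec by blast

lemma black_phi: "d \<in> D \<Longrightarrow> black (phi d) = (\<not> black d)"
  by (simp add: phi_apply black_sigma black_alpha)

lemma black_inv_sigma: "d \<in> D \<Longrightarrow> black (inv sigma d) = black d"
  using black_sigma[of "inv sigma d"] by simp

lemma black_phi_funpow: "d \<in> D \<Longrightarrow> black ((phi ^^ n) d) = (black d = even n)"
  by (induct n) (simp_all add: black_phi)

lemma s0_ne_s1: "s0 \<noteq> s1"
proof
  assume eq: "s0 = s1"
  have "orb sigma ` orb phi z = {s0, orb sigma (phi z), s1, orb sigma ((phi ^^ 3) z)}"
    using face_enum[OF root_in_darts] by simp
  then have "card (orb sigma ` orb phi z) \<le> 3"
    using eq by (simp add: card_insert_if)
  then show False using quadrangular_faces[OF faceI[OF root_in_darts]] by simp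
qed

lemma two_orientationsD:
  assumes "Out \<in> two_orientations D alpha sigma z"
  shows "Out \<subseteq> D" "d \<in> D \<Longrightarrow> d \<in> Out \<longleftrightarrow> alpha d \<notin> Out"
    "d \<in> D \<Longrightarrow> orb sigma d \<noteq> s0 \<Longrightarrow> orb sigma d \<noteq> s1 \<Longrightarrow> card {e \<in> orb sigma d. e \<in> Out} = 2"
proof -
  note Out = assms[unfolded two_orientations_def s0_vertex_def s1_vertex_def mem_Collect_eq]
  show "Out \<subseteq> D" using Out by blast
  show "d \<in> D \<Longrightarrow> d \<in> Out \<longleftrightarrow> alpha d \<notin> Out" using Out by blast
  show "d \<in> D \<Longrightarrow> orb sigma d \<noteq> s0 \<Longrightarrow> orb sigma d \<noteq> s1 \<Longrightarrow> card {e \<in> orb sigma d. e \<in> Out} = 2"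
    using Out by blast
qed

lemma card_two_orientation:
  assumes Out: "Out \<in> two_orientations D alpha sigma z"
  shows "card Out = card edges"
proof -
  note Out = two_orientationsD[OF Out]
  have "bij_betw (\<lambda>d. {d, alpha d}) Out edges"
  proof (rule bij_betw_imageI)
    show "inj_on (\<lambda>d. {d, alpha d}) Out"
    proof (rule inj_onI)
      fix d d' assume "d \<in> Out" "d' \<in> Out" "{d, alpha d} = {d', alpha d'}"
      then show "d = d'" using Out(1,2) by (auto simp: doubleton_eq_iff)
    qed
    show "(\<lambda>d. {d, alpha d}) ` Out = edges"
    proof
      show "(\<lambda>d. {d, alpha d}) ` Out \<subseteq> edges" using Out(1) edgeI by blast
      show "edges \<subseteq> (\<lambda>d. {d, alpha d}) ` Out"
      proof
        fix e assume "e \<in> edges"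
        then obtain d where d: "d \<in> D" "e = {d, alpha d}" unfolding map_edges_def by blast
        then have "e = {alpha d, alpha (alpha d)}" by auto
        then show "e \<in> (\<lambda>d. {d, alpha d}) ` Out" using d Out(2)[OF d(1)] by blast
      qed
    qed
  qed
  then show ?thesis by (rule bij_betw_same_card)
qed

text \<open>Summing the outdegrees: all \<open>card edges = 2 * (card vertices - 2)\<close> darts of a 2-orientation
  leave vertices other than \<open>s0\<close> and \<open>s1\<close>, so these two are sinks.\<close>

lemma two_orientation_sinks:
  assumes Out: "Out \<in> two_orientations D alpha sigma z"
  shows "s0 \<inter> Out = {}" "s1 \<inter> Out = {}"
proof -
  note Out' = two_orientationsD[OF Out]
  have s01: "s0 \<in> vertices" "s1 \<in> vertices" using vertexI root_in_darts by simp_all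
  have fin: "finite (v \<inter> Out)" for v using finite_subset[OF Out'(1) finite_darts] by simp
  have "card Out = (\<Sum>v \<in> vertices. card (v \<inter> Out))"
    using card_eq_sum_over_vertices[OF Out'(1)] .
  also have "\<dots> = (\<Sum>v \<in> {s0, s1}. card (v \<inter> Out)) + (\<Sum>v \<in> vertices - {s0, s1}. card (v \<inter> Out))"
    using s01 sum.subset_diff[OF _ finite_vertices, of "{s0, s1}"] by (simp add: add.commute)
  also have "(\<Sum>v \<in> vertices - {s0, s1}. card (v \<inter> Out)) = (\<Sum>v \<in> vertices - {s0, s1}. 2)"
  proof (rule sum.cong[OF refl])
    fix v assume v: "v \<in> vertices - {s0, s1}"
    then obtain d where "d \<in> D" "v = orb sigma d" unfolding map_vertices_def by blast
    then show "card (v \<inter> Out) = 2" using v Out'(3) by (simp add: Int_def)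
  qed
  also have "\<dots> = 2 * (card vertices - 2)"
    using s01 s0_ne_s1 finite_vertices by (simp add: card_Diff_subset)
  finally have "card (s0 \<inter> Out) + card (s1 \<inter> Out) = 0"
    using s0_ne_s1 card_two_orientation[OF Out] card_edges_eq card_vertices_eq by simp
  then show "s0 \<inter> Out = {}" "s1 \<inter> Out = {}" using fin by simp_all
qed

lemma strong_labelingsD:
  assumes "l \<in> strong_labelings D alpha sigma z"
  shows "l \<in> D \<rightarrow>\<^sub>E {0, 1}"
    "e \<in> D \<Longrightarrow> orb sigma e = s0 \<Longrightarrow> l e = 0"
    "e \<in> D \<Longrightarrow> orb sigma e = s1 \<Longrightarrow> l e = 1"
    "v \<in> D \<Longrightarrow> orb sigma v \<noteq> s0 \<Longrightarrow> orb sigma v \<noteq> s1 \<Longrightarrow>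
       \<exists>d \<in> orb sigma v. \<exists>k. 0 < k \<and> k < card (orb sigma v) \<and>
         (\<forall>j < card (orb sigma v). l ((sigma ^^ j) d) = (if j < k then 1 else 0))"
    "d \<in> D \<Longrightarrow> (l d = l (inv sigma d)) \<noteq> (l (alpha d) = l (inv sigma (alpha d)))"
    "P \<in> faces \<Longrightarrow> P \<noteq> orb phi z \<Longrightarrow>
       \<exists>f \<in> P. l (alpha f) = 0 \<and> l (alpha (phi f)) = 0
         \<and> l (alpha ((phi ^^ 2) f)) = 1 \<and> l (alpha ((phi ^^ 3) f)) = 1"
    "l (alpha ((phi ^^ 3) z)) = 0" "l (alpha ((phi ^^ 2) z)) = 0"
    "l (alpha (phi z)) = 1" "l (alpha z) = 1"
proof -
  note l = assms[unfolded strong_labelings_def Let_def s0_vertex_def s1_vertex_def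
      outer_face_def mem_Collect_eq]
  note G0 = l[THEN conjunct2, THEN conjunct1]
  note G1 = l[THEN conjunct2, THEN conjunct2, THEN conjunct1]
  note G2 = l[THEN conjunct2, THEN conjunct2, THEN conjunct2, THEN conjunct1]
  note G3 = l[THEN conjunct2, THEN conjunct2, THEN conjunct2, THEN conjunct2]
  show "l \<in> D \<rightarrow>\<^sub>E {0, 1}" using l by (rule conjunct1)
  show "e \<in> D \<Longrightarrow> orb sigma e = s0 \<Longrightarrow> l e = 0" using G0 by blast
  show "e \<in> D \<Longrightarrow> orb sigma e = s1 \<Longrightarrow> l e = 1" using G0 by blast
  show "v \<in> D \<Longrightarrow> orb sigma v \<noteq> s0 \<Longrightarrow> orb sigma v \<noteq> s1 \<Longrightarrow>
       \<exists>d \<in> orb sigma v. \<exists>k. 0 < k \<and> k < card (orb sigma v) \<and>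
         (\<forall>j < card (orb sigma v). l ((sigma ^^ j) d) = (if j < k then 1 else 0))"
    using G1 by blast
  show "d \<in> D \<Longrightarrow> (l d = l (inv sigma d)) \<noteq> (l (alpha d) = l (inv sigma (alpha d)))"
    using G2 by blast
  show "P \<in> faces \<Longrightarrow> P \<noteq> orb phi z \<Longrightarrow>
       \<exists>f \<in> P. l (alpha f) = 0 \<and> l (alpha (phi f)) = 0
         \<and> l (alpha ((phi ^^ 2) f)) = 1 \<and> l (alpha ((phi ^^ 3) f)) = 1"
    using G3[THEN conjunct1] by blast
  show "l (alpha ((phi ^^ 3) z)) = 0" "l (alpha ((phi ^^ 2) z)) = 0"
    "l (alpha (phi z)) = 1" "l (alpha z) = 1"
    using G3[THEN conjunct2] by simp_all
qed

lemma strong_labeling_binary: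
  "l \<in> strong_labelings D alpha sigma z \<Longrightarrow> d \<in> D \<Longrightarrow> l d = 0 \<or> l d = 1"
  using strong_labelingsD(1) by (auto simp: PiE_iff)

definition orientation_of :: "('d \<Rightarrow> nat) \<Rightarrow> 'd set" where
  "orientation_of l = {d \<in> D. l d \<noteq> l (inv sigma d)}"

lemma orientation_of_strong_labeling:
  assumes l: "l \<in> strong_labelings D alpha sigma z"
  shows "orientation_of l \<in> two_orientations D alpha sigma z"
proof -
  have "d \<in> orientation_of l \<longleftrightarrow> alpha d \<notin> orientation_of l" if "d \<in> D" for d
    using strong_labelingsD(5)[OF l that] that unfolding orientation_of_def by auto
  moreover have "card {e \<in> orb sigma d. e \<in> orientation_of l} = 2"
    if d: "d \<in> D" and poles: "orb sigma d \<noteq> s0" "orb sigma d \<noteq> s1" for d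
  proof -
    obtain x k where x: "x \<in> orb sigma d" and k: "0 < k" "k < card (orb sigma d)"
      and interval: "\<forall>j < card (orb sigma d). l ((sigma ^^ j) x) = (if j < k then 1 else 0)"
      using strong_labelingsD(4)[OF l d poles] by blast
    have "orb sigma x = orb sigma d" using x orb_eq_iff[OF permutation_sigma] by blast
    then have "card {e \<in> orb sigma d. l e \<noteq> l (inv sigma e)} = 2"
      using card_changes_of_interval_labeling[OF permutation_sigma, of k x "1::nat" 0 l] k interval
      by simp
    moreover have "{e \<in> orb sigma d. e \<in> orientation_of l} = {e \<in> orb sigma d. l e \<noteq> l (inv sigma e)}"
      using orb_subset[OF sigma_permutes d] unfolding orientation_of_def by blast
    ultimately show ?thesis by simp
  qed
  ultimately show ?thesis
    unfolding two_orientations_def s0_vertex_def s1_vertex_def orientation_of_def by blast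
qed

lemma inv_sigma_root: "inv sigma z = alpha ((phi ^^ 3) z)"
proof -
  have "sigma (alpha ((phi ^^ 3) z)) = (phi ^^ 4) z"
    by (simp add: phi_apply numeral_eq_Suc)
  then show ?thesis using root_in_darts by (metis inv_sigma_sigma phi_funpow_4)
qed

lemma strong_labeling_face_pattern:
  assumes l: "l \<in> strong_labelings D alpha sigma z" and x: "x \<in> D"
  obtains f k where "f \<in> D" "k < 4" "x = (phi ^^ k) f"
    "l (alpha f) = l (alpha (phi f))" "l (alpha ((phi ^^ 2) f)) = l (alpha ((phi ^^ 3) f))"
    "l (alpha (phi f)) \<noteq> l (alpha ((phi ^^ 2) f))"
proof -
  have index: "\<exists>k < 4. x = (phi ^^ k) f" if "x \<in> orb phi f" "f \<in> D" for f
    using that face_enum[of f] by (auto intro: exI[of _ 0] exI[of _ 1] exI[of _ 2] exI[of _ 3])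
  show ?thesis
  proof (cases "orb phi x = orb phi z")
    case True
    then obtain k where "k < 4" "x = (phi ^^ k) z"
      using index root_in_darts orb_eq_iff[OF permutation_phi] by blast
    then show ?thesis using that root_in_darts strong_labelingsD(7-10)[OF l] by simp
  next
    case False
    then obtain f where f: "f \<in> orb phi x" "l (alpha f) = 0" "l (alpha (phi f)) = 0"
      "l (alpha ((phi ^^ 2) f)) = 1" "l (alpha ((phi ^^ 3) f)) = 1"
      using strong_labelingsD(6)[OF l faceI[OF x]] by blast
    moreover have "f \<in> D" using f(1) orb_subset[OF phi_permutes x] by blast
    moreover have "x \<in> orb phi f" using f(1) orb_eq_iff[OF permutation_phi] by metis
    ultimately show ?thesis using that index by (metis zero_neq_one)
  qed
qed

lemma strong_labeling_face_alternates:
  assumes l: "l \<in> strong_labelings D alpha sigma z" and x: "x \<in> D"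
  shows "(l (alpha ((phi ^^ 2) x)) \<noteq> l (alpha (phi x))) = (l (alpha (phi x)) = l (alpha x))"
proof -
  obtain f k where f: "f \<in> D" "k < 4" "x = (phi ^^ k) f"
    and pattern: "l (alpha f) = l (alpha (phi f))" "l (alpha ((phi ^^ 2) f)) = l (alpha ((phi ^^ 3) f))"
      "l (alpha (phi f)) \<noteq> l (alpha ((phi ^^ 2) f))"
    using strong_labeling_face_pattern[OF l x] by blast
  define L where "L j = l (alpha ((phi ^^ j) f))" for j
  have L4: "L (j + 4) = L j" for j unfolding L_def using f(1) by (simp add: funpow_add)
  have "L k = l (alpha x)" "L (k + 1) = l (alpha (phi x))" "L (k + 2) = l (alpha ((phi ^^ 2) x))"
    unfolding L_def f(3) by (simp_all add: numeral_eq_Suc)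
  moreover have "(L (k + 2) \<noteq> L (k + 1)) = (L (k + 1) = L k)"
  proof -
    have "L 0 = L 1" "L 2 = L 3" "L 1 \<noteq> L 2"
      unfolding L_def using pattern by simp_all
    moreover have "k = 0 \<or> k = 1 \<or> k = 2 \<or> k = 3" using f(2) by arith
    ultimately show ?thesis using L4[of 0] L4[of 1] by (elim disjE) (simp_all add: numeral_eq_Suc)
  qed
  ultimately show ?thesis by simp
qed

lemma strong_labeling_across_edge:
  assumes l: "l \<in> strong_labelings D alpha sigma z" and d: "d \<in> D"
  shows "(l (sigma d) \<noteq> l (inv sigma (alpha (sigma d)))) = (l (alpha (sigma d)) = l d)"
proof -
  have "(l (sigma d) = l d) \<noteq> (l (alpha (sigma d)) = l (inv sigma (alpha (sigma d))))"
    using strong_labelingsD(5)[OF l, of "sigma d"] d by simp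
  then show ?thesis
    using strong_labeling_binary[OF l] d by (metis alpha_in_iff inv_sigma_in_iff sigma_in_iff)
qed

lemma strong_labeling_changes_at_black:
  assumes l: "l \<in> strong_labelings D alpha sigma z" and b: "b \<in> D"
  shows "(l (alpha (sigma b)) \<noteq> l b) = black b"
proof -
  define dl where "dl b = ((l (alpha (sigma b)) \<noteq> l b) \<noteq> black b)" for b
  have along_face: "dl (alpha (sigma b)) = dl b" if b: "b \<in> D" for b
    using strong_labeling_face_alternates[OF l, of "alpha b"] b
    unfolding dl_def by (simp add: phi_apply numeral_eq_Suc black_alpha black_sigma)
  have across_edge: "dl (inv sigma (alpha (sigma d))) = dl d" if d: "d \<in> D" for d
    using strong_labeling_across_edge[OF l d] d
    unfolding dl_def by (simp add: black_inv_sigma black_alpha black_sigma)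
  have inv_sigma: "dl (inv sigma x) = dl x" if x: "x \<in> D" for x
    using along_face[of "inv sigma (alpha x)"] across_edge[of "inv sigma (alpha x)"] x by simp
  have dl_sigma: "dl (sigma y) = dl y" if "y \<in> D" for y
    using inv_sigma[of "sigma y"] that by simp
  have dl_alpha: "dl (alpha y) = dl y" if "y \<in> D" for y
    using along_face[of "inv sigma y"] inv_sigma[of y] that by simp
  have "inv sigma z \<in> D" using root_in_darts by simp
  then have "dl b = dl (inv sigma z)"
    using connected_constant[of dl, OF dl_alpha dl_sigma b] by blast
  moreover have "\<not> dl (inv sigma z)"
  proof -
    have "l (inv sigma z) = 0" "l (alpha z) = 1"
      using strong_labelingsD(7,10)[OF l] inv_sigma_root by simp_all
    then show ?thesis
      using black_inv_sigma[OF root_in_darts] black_root unfolding dl_def by simp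
  qed
  ultimately show ?thesis unfolding dl_def by simp
qed

lemma inj_on_orientation_of: "inj_on orientation_of (strong_labelings D alpha sigma z)"
proof (rule inj_onI)
  fix l1 l2
  assume l1: "l1 \<in> strong_labelings D alpha sigma z" and l2: "l2 \<in> strong_labelings D alpha sigma z"
    and eq: "orientation_of l1 = orientation_of l2"
  have binary: "(a1 = a2) = (b1 = b2)"
    if "(a1 \<noteq> b1) = (a2 \<noteq> b2)" "a1 \<in> {0, 1}" "b1 \<in> {0, 1}" "a2 \<in> {0, 1}" "b2 \<in> {0, 1::nat}"
    for a1 b1 a2 b2 using that by auto
  have bin: "l1 d \<in> {0, 1}" "l2 d \<in> {0, 1}" if "d \<in> D" for d
    using strong_labeling_binary[OF l1 that] strong_labeling_binary[OF l2 that] by auto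
  define m where "m d = (l1 d = l2 d)" for d
  have m_sigma: "m (sigma d) = m d" if d: "d \<in> D" for d
  proof -
    have "sigma d \<in> orientation_of l1 \<longleftrightarrow> sigma d \<in> orientation_of l2" using eq by simp
    then show ?thesis
      unfolding m_def orientation_of_def using d bin by (intro binary) auto
  qed
  have m_face: "m (alpha (sigma d)) = m d" if d: "d \<in> D" for d
    unfolding m_def using d bin strong_labeling_changes_at_black[OF l1 d]
      strong_labeling_changes_at_black[OF l2 d] by (intro binary) auto
  have m_alpha: "m (alpha d) = m d" if "d \<in> D" for d
    using m_face[of "inv sigma d"] m_sigma[of "inv sigma d"] that by simp
  have "m d = m z" if "d \<in> D" for d
    using connected_constant[of m, OF m_alpha m_sigma that root_in_darts] .
  moreover have "m z"
    using strong_labelingsD(2)[OF l1 root_in_darts] strong_labelingsD(2)[OF l2 root_in_darts]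
    unfolding m_def by simp
  ultimately show "l1 = l2"
    using PiE_arb[OF strong_labelingsD(1)[OF l1]] PiE_arb[OF strong_labelingsD(1)[OF l2]]
    unfolding m_def by (metis ext)
qed

lemma outdegree_two_orientation:
  assumes Out: "Out \<in> two_orientations D alpha sigma z" and d: "d \<in> D"
  shows "card {e \<in> orb sigma d. e \<in> Out} \<in> {0, 2}"
proof (cases "orb sigma d = s0 \<or> orb sigma d = s1")
  case True
  then have "{e \<in> orb sigma d. e \<in> Out} = {}" using two_orientation_sinks[OF Out] by auto
  then show ?thesis by (metis card.empty insertI1)
qed (use two_orientationsD(3)[OF Out d] in auto)

lemma card_black_corners:
  assumes f: "f \<in> D" shows "card {d \<in> orb phi f. black d} = 2"
proof -
  have "{d \<in> orb phi f. black d} = (if black f then {f, (phi ^^ 2) f} else {phi f, (phi ^^ 3) f})"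
    using face_enum[OF f] black_phi_funpow[OF f, of 1] black_phi_funpow[OF f, of 2]
      black_phi_funpow[OF f, of 3] by auto
  moreover have "f \<noteq> (phi ^^ 2) f" "phi f \<noteq> (phi ^^ 3) f"
    using face_distinct[OF f, of 0 2] face_distinct[OF f, of 1 3] by auto
  ultimately show ?thesis by simp
qed

text \<open>The prescribed flips form a cocycle: outdegrees are 0 or 2, and every face has exactly
  two black corners.\<close>

lemma exists_labeling_flipping_at:
  assumes Out: "Out \<in> two_orientations D alpha sigma z"
  shows "\<exists>l. (\<forall>d \<in> D. l (sigma d) = (l d \<noteq> (sigma d \<in> Out)) \<and> l (alpha d) = (l d \<noteq> ((d \<in> Out) \<noteq> black d)))
             \<and> \<not> l z"
proof -
  note Out' = two_orientationsD[OF Out]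
  have "\<exists>l. \<forall>d \<in> D. l (sigma d) = (l d \<noteq> (sigma d \<in> Out)) \<and> l (alpha d) = (l d \<noteq> ((d \<in> Out) \<noteq> black d))"
  proof (rule cocycle_is_coboundary)
    show "((alpha d \<in> Out) \<noteq> black (alpha d)) = ((d \<in> Out) \<noteq> black d)" if "d \<in> D" for d
      using Out'(2)[OF that] black_alpha[OF that] by auto
  next
    fix v assume v: "v \<in> vertices"
    then obtain x where x: "x \<in> D" "v = orb sigma x" unfolding map_vertices_def by blast
    have "card {d \<in> v. sigma d \<in> Out} = card {d \<in> v. d \<in> Out}"
      using card_filter_bij_betw[OF bij_betw_orb[OF permutation_sigma]] x by simp
    then show "even (card {d \<in> v. sigma d \<in> Out})"
      using outdegree_two_orientation[OF Out x(1)] x(2) by auto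
  next
    fix P assume P: "P \<in> faces"
    then obtain f where f: "f \<in> D" "P = orb phi f" unfolding map_faces_def by blast
    have fin: "finite P" using f finite_orb[OF permutation_phi] by simp
    have "card {d \<in> P. phi d \<in> Out} = card {d \<in> P. d \<in> Out}"
      using card_filter_bij_betw[OF bij_betw_orb[OF permutation_phi]] f by simp
    moreover have "card {d \<in> P. black d} = 2" using card_black_corners[OF f(1)] f(2) by simp
    ultimately show "even (card {d \<in> P. ((d \<in> Out) \<noteq> black d) \<noteq> (sigma (alpha d) \<in> Out)})"
      using odd_card_xor[OF fin, of "\<lambda>d. (d \<in> Out) \<noteq> black d" "\<lambda>d. phi d \<in> Out"]
        odd_card_xor[OF fin, of "\<lambda>d. d \<in> Out" black] by (simp add: phi_apply)
  qed
  then obtain l where "\<forall>d \<in> D. l (sigma d) = (l d \<noteq> (sigma d \<in> Out)) \<and> l (alpha d) = (l d \<noteq> ((d \<in> Out) \<noteq> black d))"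
    by blast
  then show ?thesis
    by (cases "l z") (auto intro: exI[of _ l] exI[of _ "\<lambda>d. \<not> l d"])
qed

context
  fixes Out :: "'d set" and l :: "'d \<Rightarrow> bool"
  assumes Out: "Out \<in> two_orientations D alpha sigma z"
    and flip_sigma: "d \<in> D \<Longrightarrow> l (sigma d) = (l d \<noteq> (sigma d \<in> Out))"
    and flip_alpha: "d \<in> D \<Longrightarrow> l (alpha d) = (l d \<noteq> ((d \<in> Out) \<noteq> black d))"
    and root_false: "\<not> l z"
begin

lemma flip_at_out: "d \<in> D \<Longrightarrow> (l d \<noteq> l (inv sigma d)) = (d \<in> Out)"
  using flip_sigma[of "inv sigma d"] by auto

lemma flip_along_face: "b \<in> D \<Longrightarrow> l (alpha (sigma b)) = (l b \<noteq> black b)"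
  using flip_alpha[of "sigma b"] flip_sigma[of b] black_sigma[of b] by auto

lemma constant_at_sink:
  assumes x: "x \<in> D" and sink: "orb sigma x \<inter> Out = {}" and e: "e \<in> orb sigma x"
  shows "l e = l x"
proof (rule constant_on_orb[OF _ e])
  fix e assume "e \<in> orb sigma x"
  then have "e \<in> D" "sigma e \<notin> Out"
    using orb_subset[OF sigma_permutes x] sink orb_image[OF permutation_sigma, of x] by blast+
  then show "l (sigma e) = l e" using flip_sigma by simp
qed

lemma labels_at_outer_face:
  "\<not> l (alpha ((phi ^^ 3) z))" "l (alpha z)" "l (alpha (phi z))" "\<not> l (alpha ((phi ^^ 2) z))"
  "l ((phi ^^ 2) z)"
proof -
  have z: "z \<in> D" "phi z \<in> D" "(phi ^^ 2) z \<in> D" using root_in_darts by simp_all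
  note sinks = two_orientation_sinks[OF Out]
  have "inv sigma z \<in> s0" using orb_inv[OF permutation_sigma] orb_self by metis
  then have "\<not> l (inv sigma z)" using constant_at_sink[OF z(1) sinks(1)] root_false by blast
  then show "\<not> l (alpha ((phi ^^ 3) z))" by (simp add: inv_sigma_root)
  show az: "l (alpha z)"
    using flip_along_face[of "inv sigma z"] \<open>\<not> l (inv sigma z)\<close> black_inv_sigma black_root z
    by simp
  show aphi: "l (alpha (phi z))"
    using flip_along_face[of "alpha z"] az black_alpha black_root z by (simp add: phi_apply)
  have phi2: "sigma (alpha (phi z)) = (phi ^^ 2) z" by (simp add: phi_apply numeral_eq_Suc)
  show "\<not> l (alpha ((phi ^^ 2) z))"
    using flip_along_face[of "alpha (phi z)"] aphi black_alpha black_phi black_root z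
    by (simp add: phi2)
  have "alpha (phi z) = inv sigma ((phi ^^ 2) z)" using phi2 inv_sigma_sigma by metis
  then have "alpha (phi z) \<in> s1" using orb_inv[OF permutation_sigma] orb_self by metis
  then show "l ((phi ^^ 2) z)" using constant_at_sink[OF z(3) sinks(2)] aphi by blast
qed

lemma interval_at_vertex:
  assumes v: "v \<in> D" and poles: "orb sigma v \<noteq> s0" "orb sigma v \<noteq> s1"
  shows "\<exists>d \<in> orb sigma v. \<exists>k. 0 < k \<and> k < card (orb sigma v) \<and>
           (\<forall>j < card (orb sigma v). l ((sigma ^^ j) d) = (j < k))"
proof -
  have interval: "\<exists>k. 0 < k \<and> k < card (orb sigma v) \<and> (sigma ^^ k) d \<in> Out \<and>
      (\<forall>j < card (orb sigma v). l ((sigma ^^ j) d) = (if j < k then l d else \<not> l d))"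
    if d: "d \<in> orb sigma v" "d \<in> Out" for d
  proof -
    have same: "orb sigma d = orb sigma v" using d orb_eq_iff[OF permutation_sigma] by blast
    have "card {e \<in> orb sigma d. e \<in> Out} = 2"
      using two_orientationsD(3)[OF Out v poles] same by simp
    moreover have "l (sigma e) = (l e \<noteq> (sigma e \<in> Out))" if "e \<in> orb sigma d" for e
      using that same orb_subset[OF sigma_permutes v] flip_sigma by blast
    ultimately show ?thesis
      using interval_labeling_of_two_changes[OF permutation_sigma d(2)] same by simp
  qed
  have from_true: ?thesis if d: "d \<in> orb sigma v" "d \<in> Out" "l d" for d
  proof -
    obtain k where "0 < k" "k < card (orb sigma v)"
      "\<forall>j < card (orb sigma v). l ((sigma ^^ j) d) = (if j < k then l d else \<not> l d)"
      using interval[OF d(1,2)] by blast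
    then show ?thesis using d(3) by (intro bexI[OF _ d(1)] exI[of _ k]) auto
  qed
  obtain d where d: "d \<in> orb sigma v" "d \<in> Out"
    using two_orientationsD(3)[OF Out v poles]
    by (metis (no_types, lifting) card.empty empty_Collect_eq zero_neq_numeral)
  show ?thesis
  proof (cases "l d")
    case False
    then obtain k where k: "k < card (orb sigma v)" "(sigma ^^ k) d \<in> Out" "l ((sigma ^^ k) d)"
      using interval[OF d] by auto
    moreover have "(sigma ^^ k) d \<in> orb sigma v"
      using d(1) funpow_in_orb orb_eq_iff[OF permutation_sigma] by metis
    ultimately show ?thesis using from_true by blast
  qed (use from_true d in blast)
qed

lemma pattern_at_face:
  assumes d0: "d0 \<in> D"
  shows "\<exists>f \<in> orb phi d0. \<not> l (alpha f) \<and> \<not> l (alpha (phi f))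
           \<and> l (alpha ((phi ^^ 2) f)) \<and> l (alpha ((phi ^^ 3) f))"
proof -
  have step: "l (alpha ((phi ^^ Suc j) f)) = (l (alpha ((phi ^^ j) f)) \<noteq> odd j)"
    if "f \<in> D" "black f" for f j
    using flip_along_face[of "alpha ((phi ^^ j) f)"] that
    by (simp add: phi_apply black_alpha black_phi_funpow)
  define f1 where "f1 = (if black d0 then d0 else phi d0)"
  have f1: "f1 \<in> orb phi d0" "f1 \<in> D" "black f1"
    unfolding f1_def using d0 black_phi[OF d0] orb_self[of d0 phi] funpow_in_orb[of 1 phi d0] by auto
  obtain f where f: "f \<in> orb phi d0" "f \<in> D" "black f" "\<not> l (alpha f)"
  proof (cases "l (alpha f1)")
    case True
    have "(phi ^^ 2) f1 \<in> orb phi d0"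
      using f1(1) funpow_in_orb orb_eq_iff[OF permutation_phi] by metis
    moreover have "black ((phi ^^ 2) f1)" using black_phi_funpow[OF f1(2)] f1(3) by simp
    moreover have "\<not> l (alpha ((phi ^^ 2) f1))"
      using step[OF f1(2,3), of 0] step[OF f1(2,3), of 1] True by (simp add: numeral_eq_Suc)
    ultimately show ?thesis using that f1(2) by simp
  qed (use that f1 in blast)
  then show ?thesis
    using step[OF f(2,3), of 0] step[OF f(2,3), of 1] step[OF f(2,3), of 2]
    by (intro bexI[OF _ f(1)]) (simp add: numeral_eq_Suc)
qed

lemma strong_labeling_of_flipping:
  "restrict (\<lambda>d. of_bool (l d)) D \<in> strong_labelings D alpha sigma z"
proof -
  let ?lab = "restrict (\<lambda>d. of_bool (l d) :: nat) D"
  have z: "z \<in> D" "phi z \<in> D" "(phi ^^ 2) z \<in> D" "(phi ^^ 3) z \<in> D"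
    using root_in_darts by simp_all
  note sinks = two_orientation_sinks[OF Out]
  have G0: "(orb sigma e = s0 \<longrightarrow> ?lab e = 0) \<and> (orb sigma e = s1 \<longrightarrow> ?lab e = 1)" if e: "e \<in> D" for e
    using constant_at_sink[OF z(1) sinks(1), of e] constant_at_sink[OF z(3) sinks(2), of e]
      orb_eq_iff[OF permutation_sigma] root_false labels_at_outer_face(5) e by auto
  have G1: "\<exists>d \<in> orb sigma v. \<exists>k. 0 < k \<and> k < card (orb sigma v) \<and>
      (\<forall>j < card (orb sigma v). ?lab ((sigma ^^ j) d) = (if j < k then 1 else 0))"
    if v: "v \<in> D" "orb sigma v \<noteq> s0" "orb sigma v \<noteq> s1" for v
  proof -
    obtain d k where d: "d \<in> orb sigma v" "0 < k" "k < card (orb sigma v)"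
      and interval: "\<forall>j < card (orb sigma v). l ((sigma ^^ j) d) = (j < k)"
      using interval_at_vertex[OF v] by blast
    have "d \<in> D" using d(1) orb_subset[OF sigma_permutes v(1)] by blast
    then have "?lab ((sigma ^^ j) d) = of_bool (l ((sigma ^^ j) d))" for j
      using funpow_permutes_in[OF sigma_permutes] by simp
    then show ?thesis using d interval by (intro bexI[OF _ d(1)] exI[of _ k]) auto
  qed
  have G2: "(?lab d = ?lab (inv sigma d)) \<noteq> (?lab (alpha d) = ?lab (inv sigma (alpha d)))"
    if "d \<in> D" for d
    using flip_at_out[of d] flip_at_out[of "alpha d"] two_orientationsD(2)[OF Out that] that by auto
  have G3: "\<exists>f \<in> P. ?lab (alpha f) = 0 \<and> ?lab (alpha (phi f)) = 0
      \<and> ?lab (alpha ((phi ^^ 2) f)) = 1 \<and> ?lab (alpha ((phi ^^ 3) f)) = 1" if P: "P \<in> faces" for P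
  proof -
    obtain d0 where d0: "d0 \<in> D" "P = orb phi d0" using P unfolding map_faces_def by blast
    obtain f where f: "f \<in> orb phi d0" "\<not> l (alpha f)" "\<not> l (alpha (phi f))"
      "l (alpha ((phi ^^ 2) f))" "l (alpha ((phi ^^ 3) f))"
      using pattern_at_face[OF d0(1)] by blast
    have "f \<in> D" using f(1) orb_subset[OF phi_permutes d0(1)] by blast
    then show ?thesis unfolding d0(2) using f by (intro bexI[OF _ f(1)]) simp
  qed
  show ?thesis
    unfolding strong_labelings_def Let_def s0_vertex_def s1_vertex_def mem_Collect_eq
  proof (intro conjI)
    show "?lab \<in> D \<rightarrow>\<^sub>E {0, 1}" by (auto simp: PiE_iff)
    show "?lab (alpha ((phi ^^ 3) z)) = 0" "?lab (alpha ((phi ^^ 2) z)) = 0"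
      "?lab (alpha (phi z)) = 1" "?lab (alpha z) = 1"
      using labels_at_outer_face z by simp_all
  qed (use G0 G1 G2 G3 in blast)+
qed

lemma orientation_of_flipping: "orientation_of (restrict (\<lambda>d. of_bool (l d)) D) = Out"
  using flip_at_out two_orientationsD(1)[OF Out] unfolding orientation_of_def by auto

end

theorem bij_betw_orientation_of:
  "bij_betw orientation_of (strong_labelings D alpha sigma z) (two_orientations D alpha sigma z)"
  unfolding bij_betw_def
proof
  show "inj_on orientation_of (strong_labelings D alpha sigma z)" by (rule inj_on_orientation_of)
  show "orientation_of ` strong_labelings D alpha sigma z = two_orientations D alpha sigma z"
  proof
    show "orientation_of ` strong_labelings D alpha sigma z \<subseteq> two_orientations D alpha sigma z"
      using orientation_of_strong_labeling by blast
    show "two_orientations D alpha sigma z \<subseteq> orientation_of ` strong_labelings D alpha sigma z"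
    proof
      fix Out assume Out: "Out \<in> two_orientations D alpha sigma z"
      obtain l where l: "\<forall>d \<in> D. l (sigma d) = (l d \<noteq> (sigma d \<in> Out))
          \<and> l (alpha d) = (l d \<noteq> ((d \<in> Out) \<noteq> black d))" "\<not> l z"
        using exists_labeling_flipping_at[OF Out] by blast
      then have flips: "\<And>d. d \<in> D \<Longrightarrow> l (sigma d) = (l d \<noteq> (sigma d \<in> Out))"
          "\<And>d. d \<in> D \<Longrightarrow> l (alpha d) = (l d \<noteq> ((d \<in> Out) \<noteq> black d))" "\<not> l z"
        by simp_all
      have "restrict (\<lambda>d. of_bool (l d)) D \<in> strong_labelings D alpha sigma z"
        by (rule strong_labeling_of_flipping[OF Out]) (use flips in auto)
      moreover have "Out = orientation_of (restrict (\<lambda>d. of_bool (l d)) D)"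
        by (rule orientation_of_flipping[OF Out, symmetric]) (use flips in auto)
      ultimately show "Out \<in> orientation_of ` strong_labelings D alpha sigma z" by blast
    qed
  qed
qed

end

theorem corollary24:
  fixes D :: "'d set" and alpha sigma :: "'d \<Rightarrow> 'd" and z :: 'd
  assumes "is_quadrangulation D alpha sigma z"
  shows "\<exists>f. bij_betw f (two_orientations D alpha sigma z) (strong_labelings D alpha sigma z)"
proof -
  interpret quadrangulation D alpha sigma z
    using assms by (rule quadrangulation_if_is_quadrangulation)
  show ?thesis using bij_betw_inv_into[OF bij_betw_orientation_of] by blast
qed

end
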